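(* Fix $n$ and a probability vector $p\in\mathbb R^I$ with positive entries. If $\vartheta^n_p<0$, then the state process $X^n$ of the $n$-th system is transient under every work-conserving stationary Markov scheduling policy. If $\vartheta^n_p=0$, then $X^n$ is not positive recurrent under any work-conserving stationary Markov scheduling policy.
   Context: Network: $\mathcal I=\{1,\dots,I\}$, $\mathcal J=\{1,\dots,J\}$, edges $\mathcal E\subset\mathcal I\times\mathcal J$ with the bipartite graph $\mathcal G=(\mathcal I\cup\mathcal J,\mathcal E)$ a tree; $i\sim j$ iff $(i,j)\in\mathcal E$, $\mathcal J(i)=\{j:i\sim j\}$, $\mathcal I(j)=\{i:i\sim j\}$; $\mathbb R^{\mathcal G}$ (resp. $\mathbb Z^{\mathcal G}_+$) denotes arrays in $\mathbb R^{I\times J}$ (resp. with nonnegative integer entries) vanishing off $\mathcal E$. For each $n\in\mathbb N$: $\lambda^n_i>0$, $\mu^n_{ij}>0$, $N^n_j\in\mathbb N$, with $\lambda^n_i/n\to\lambda_i>0$, $N^n_j/n\to\nu_j>0$, $\mu^n_{ij}\to\mu_{ij}>0$, $\hat\lambda^n_i:=(\lambda^n_i-n\lambda_i)/\sqrt n$, $\hat\mu^n_{ij}:=\sqrt n(\mu^n_{ij}-\mu_{ij})$, $\hat\nu^n_j:=\sqrt n(N^n_j/n-\nu_j)$ convergent to real limits. Complete resource pooling: the LP "minimize $\max_j\sum_i\xi_{ij}$ over nonnegative $\xi\in\mathbb R^{\mathcal G}$ subject to $\sum_j\mu_{ij}\nu_j\xi_{ij}=\lambda_i$ $\forall i$"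 has a unique solution $\xi^*$, with $\sum_i\xi^*_{ij}=1$ $\forall j$ and $\xi^*_{ij}>0$ for $i\sim j$; $z^*_{ij}:=\xi^*_{ij}\nu_j$; $\theta^n_j:=\hat\nu^n_j+\sum_{i\in\mathcal I(j)}(\hat\mu^n_{ij}/\mu^n_{ij})z^*_{ij}$. $\vartheta^n_p$: for a probability vector $p$ with positive entries, the (unique) optimal value of: maximize $\vartheta$ over $(\vartheta,\kappa)\in\mathbb R\times\mathbb R^{\mathcal G}$ subject to $\hat\lambda^n_i\le\sum_{j\in\mathcal J(i)}\mu^n_{ij}\kappa_{ij}-\vartheta p_i$ $\forall i$ and $\sum_{i\in\mathcal I(j)}\kappa_{ij}=\theta^n_j$ $\forall j$. The $n$-th system (no abandonment, infinite buffers): for $x\in\mathbb Z^I_+$ (numbers of customers of each class in system), the work-conserving action set is $\mathcal Z^n(x)=\{z\in\mathbb Z^{\mathcal G}_+: q_i\ge0,\ y_j\ge0,\ q_i\wedge y_j=0\ \forall(i,j)\in\mathcal E\}$, where $q_i=x_i-\sum_jz_{ij}$ and $y_j=N^n_j-\sum_iz_{ij}$. A work-conserving stationary Markov scheduling policy is a map $z:\mathbb Z^I_+\to\mathbb Z^{\mathcal G}_+$ with $z(x)\in\mathcal Z^n(x)$ for all $x$; under it, $X^n$ is the continuous-time Markov chain on $\mathbb Z^I_+$ with generator $\mathcal L^n_zf(x)=\sum_{i}\big(\lambda^n_i(f(x+e_i)-f(x))+\sum_{j\in\mathcal J(i)}\mu^n_{ij}z_{ij}(x)(f(x-e_i)-f(x))\big)$,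 $e_i$ the $i$-th unit vector. *)

theory Defs
  imports "HOL-Analysis.Analysis"
begin

definition bip_adj :: "('i \<times> 'j) set \<Rightarrow> ('i + 'j) \<Rightarrow> ('i + 'j) \<Rightarrow> bool" where
  "bip_adj E u v \<longleftrightarrow> (\<exists>i j. (i, j) \<in> E \<and> ((u = Inl i \<and> v = Inr j) \<or> (u = Inr j \<and> v = Inl i)))"

definition bip_tree :: "('i \<times> 'j) set \<Rightarrow> bool" where
  "bip_tree E \<longleftrightarrow>
     (\<forall>u v. (u, v) \<in> {(a, b). bip_adj E a b}\<^sup>*) \<and>
     \<not> (\<exists>cs :: ('i + 'j) list. length cs \<ge> 3 \<and> distinct cs \<and>
            (\<forall>k. Suc k < length cs \<longrightarrow> bip_adj E (cs ! k) (cs ! Suc k)) \<and>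
            bip_adj E (last cs) (hd cs))"

definition crp_feasible ::
  "('i::finite \<times> 'j::finite) set \<Rightarrow> ('i \<Rightarrow> real) \<Rightarrow> ('i \<Rightarrow> 'j \<Rightarrow> real) \<Rightarrow> ('j \<Rightarrow> real)
   \<Rightarrow> ('i \<Rightarrow> 'j \<Rightarrow> real) \<Rightarrow> bool" where
  "crp_feasible E lam mu nu \<xi> \<longleftrightarrow>
     (\<forall>i j. \<xi> i j \<ge> 0) \<and> (\<forall>i j. (i, j) \<notin> E \<longrightarrow> \<xi> i j = 0) \<and>
     (\<forall>i. (\<Sum>j \<in> {j. (i, j) \<in> E}. mu i j * nu j * \<xi> i j) = lam i)"

definition crp_obj :: "('i::finite \<Rightarrow> 'j::finite \<Rightarrow> real) \<Rightarrow> real" where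
  "crp_obj \<xi> = Max (range (\<lambda>j. \<Sum>i\<in>UNIV. \<xi> i j))"

definition crp_unique_solution ::
  "('i::finite \<times> 'j::finite) set \<Rightarrow> ('i \<Rightarrow> real) \<Rightarrow> ('i \<Rightarrow> 'j \<Rightarrow> real) \<Rightarrow> ('j \<Rightarrow> real)
   \<Rightarrow> ('i \<Rightarrow> 'j \<Rightarrow> real) \<Rightarrow> bool" where
  "crp_unique_solution E lam mu nu \<xi>s \<longleftrightarrow>
     crp_feasible E lam mu nu \<xi>s \<and>
     (\<forall>\<xi>. crp_feasible E lam mu nu \<xi> \<longrightarrow> crp_obj \<xi>s \<le> crp_obj \<xi>) \<and>
     (\<forall>\<xi>. crp_feasible E lam mu nu \<xi> \<and> crp_obj \<xi> = crp_obj \<xi>s \<longrightarrow> \<xi> = \<xi>s) \<and>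
     (\<forall>j. (\<Sum>i\<in>UNIV. \<xi>s i j) = 1) \<and>
     (\<forall>i j. (i, j) \<in> E \<longrightarrow> \<xi>s i j > 0)"

definition lamhat :: "(nat \<Rightarrow> 'i \<Rightarrow> real) \<Rightarrow> ('i \<Rightarrow> real) \<Rightarrow> nat \<Rightarrow> 'i \<Rightarrow> real" where
  "lamhat lam lam0 n i = (lam n i - real n * lam0 i) / sqrt (real n)"

definition muhat :: "(nat \<Rightarrow> 'i \<Rightarrow> 'j \<Rightarrow> real) \<Rightarrow> ('i \<Rightarrow> 'j \<Rightarrow> real) \<Rightarrow> nat \<Rightarrow> 'i \<Rightarrow> 'j \<Rightarrow> real" where
  "muhat mu mu0 n i j = sqrt (real n) * (mu n i j - mu0 i j)"

definition nuhat :: "(nat \<Rightarrow> 'j \<Rightarrow> nat) \<Rightarrow> ('j \<Rightarrow> real) \<Rightarrow> nat \<Rightarrow> 'j \<Rightarrow> real" where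
  "nuhat N nu n j = sqrt (real n) * (real (N n j) / real n - nu j)"

definition theta ::
  "('i::finite \<times> 'j) set \<Rightarrow> (nat \<Rightarrow> 'i \<Rightarrow> 'j \<Rightarrow> real) \<Rightarrow> ('i \<Rightarrow> 'j \<Rightarrow> real) \<Rightarrow> (nat \<Rightarrow> 'j \<Rightarrow> nat)
   \<Rightarrow> ('j \<Rightarrow> real) \<Rightarrow> ('i \<Rightarrow> 'j \<Rightarrow> real) \<Rightarrow> nat \<Rightarrow> 'j \<Rightarrow> real" where
  "theta E mu mu0 N nu \<xi>s n j =
     nuhat N nu n j + (\<Sum>i \<in> {i. (i, j) \<in> E}. (muhat mu mu0 n i j / mu n i j) * (\<xi>s i j * nu j))"

definition vtheta_feasible ::
  "('i::finite \<times> 'j::finite) set \<Rightarrow> (nat \<Rightarrow> 'i \<Rightarrow> real) \<Rightarrow> ('i \<Rightarrow> real) \<Rightarrow> (nat \<Rightarrow> 'i \<Rightarrow> 'j \<Rightarrow> real)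
   \<Rightarrow> ('i \<Rightarrow> 'j \<Rightarrow> real) \<Rightarrow> (nat \<Rightarrow> 'j \<Rightarrow> nat) \<Rightarrow> ('j \<Rightarrow> real) \<Rightarrow> ('i \<Rightarrow> 'j \<Rightarrow> real)
   \<Rightarrow> nat \<Rightarrow> ('i \<Rightarrow> real) \<Rightarrow> real \<Rightarrow> ('i \<Rightarrow> 'j \<Rightarrow> real) \<Rightarrow> bool" where
  "vtheta_feasible E lam lam0 mu mu0 N nu \<xi>s n p vt \<kappa> \<longleftrightarrow>
     (\<forall>i j. (i, j) \<notin> E \<longrightarrow> \<kappa> i j = 0) \<and>
     (\<forall>i. lamhat lam lam0 n i \<le> (\<Sum>j \<in> {j. (i, j) \<in> E}. mu n i j * \<kappa> i j) - vt * p i) \<and>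
     (\<forall>j. (\<Sum>i \<in> {i. (i, j) \<in> E}. \<kappa> i j) = theta E mu mu0 N nu \<xi>s n j)"

definition vtheta_opt_value ::
  "('i::finite \<times> 'j::finite) set \<Rightarrow> (nat \<Rightarrow> 'i \<Rightarrow> real) \<Rightarrow> ('i \<Rightarrow> real) \<Rightarrow> (nat \<Rightarrow> 'i \<Rightarrow> 'j \<Rightarrow> real)
   \<Rightarrow> ('i \<Rightarrow> 'j \<Rightarrow> real) \<Rightarrow> (nat \<Rightarrow> 'j \<Rightarrow> nat) \<Rightarrow> ('j \<Rightarrow> real) \<Rightarrow> ('i \<Rightarrow> 'j \<Rightarrow> real)
   \<Rightarrow> nat \<Rightarrow> ('i \<Rightarrow> real) \<Rightarrow> real \<Rightarrow> bool" where
  "vtheta_opt_value E lam lam0 mu mu0 N nu \<xi>s n p v \<longleftrightarrow>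
     (\<exists>\<kappa>. vtheta_feasible E lam lam0 mu mu0 N nu \<xi>s n p v \<kappa>) \<and>
     (\<forall>vt \<kappa>. vtheta_feasible E lam lam0 mu mu0 N nu \<xi>s n p vt \<kappa> \<longrightarrow> vt \<le> v)"

definition wc_action ::
  "('i::finite \<times> 'j::finite) set \<Rightarrow> ('j \<Rightarrow> nat) \<Rightarrow> ('i \<Rightarrow> nat) \<Rightarrow> ('i \<Rightarrow> 'j \<Rightarrow> nat) \<Rightarrow> bool" where
  "wc_action E Nn x z \<longleftrightarrow>
     (\<forall>i j. (i, j) \<notin> E \<longrightarrow> z i j = 0) \<and>
     (\<forall>i. (\<Sum>j\<in>UNIV. z i j) \<le> x i) \<and>
     (\<forall>j. (\<Sum>i\<in>UNIV. z i j) \<le> Nn j) \<and>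
     (\<forall>i j. (i, j) \<in> E \<longrightarrow> x i - (\<Sum>j'\<in>UNIV. z i j') = 0 \<or> Nn j - (\<Sum>i'\<in>UNIV. z i' j) = 0)"

definition wc_policy ::
  "('i::finite \<times> 'j::finite) set \<Rightarrow> ('j \<Rightarrow> nat) \<Rightarrow> (('i \<Rightarrow> nat) \<Rightarrow> 'i \<Rightarrow> 'j \<Rightarrow> nat) \<Rightarrow> bool" where
  "wc_policy E Nn z \<longleftrightarrow> (\<forall>x. wc_action E Nn x (z x))"

text \<open>The chain jumps from x to x + e_i at rate la i and to
  x - e_i at rate d x i.  Quantities below are computed from the
  embedded jump chain and the (exponential) holding times.\<close>

definition up :: "('i \<Rightarrow> nat) \<Rightarrow> 'i \<Rightarrow> 'i \<Rightarrow> nat" where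
  "up x i = x(i := x i + 1)"

definition down :: "('i \<Rightarrow> nat) \<Rightarrow> 'i \<Rightarrow> 'i \<Rightarrow> nat" where
  "down x i = x(i := x i - 1)"

definition totrate :: "('i::finite \<Rightarrow> real) \<Rightarrow> (('i \<Rightarrow> nat) \<Rightarrow> 'i \<Rightarrow> real) \<Rightarrow> ('i \<Rightarrow> nat) \<Rightarrow> real" where
  "totrate la d x = (\<Sum>i\<in>UNIV. la i) + (\<Sum>i\<in>UNIV. d x i)"

text \<open>fh la d a m y: probability that the jump chain started at y hits
  a for the first time at jump number m.\<close>
primrec fh :: "('i::finite \<Rightarrow> real) \<Rightarrow> (('i \<Rightarrow> nat) \<Rightarrow> 'i \<Rightarrow> real) \<Rightarrow> ('i \<Rightarrow> nat)
               \<Rightarrow> nat \<Rightarrow> ('i \<Rightarrow> nat) \<Rightarrow> ennreal" where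
  "fh la d a 0 y = (if y = a then 1 else 0)"
| "fh la d a (Suc m) y = (if y = a then 0 else
     (\<Sum>i\<in>UNIV. ennreal (la i / totrate la d y) * fh la d a m (up y i)
              + ennreal (d y i / totrate la d y) * fh la d a m (down y i)))"

text \<open>gh la d a m y: expectation of the elapsed (continuous) time on the event
  that the chain started at y first hits a at jump number m.\<close>
primrec gh :: "('i::finite \<Rightarrow> real) \<Rightarrow> (('i \<Rightarrow> nat) \<Rightarrow> 'i \<Rightarrow> real) \<Rightarrow> ('i \<Rightarrow> nat)
               \<Rightarrow> nat \<Rightarrow> ('i \<Rightarrow> nat) \<Rightarrow> ennreal" where
  "gh la d a 0 y = 0"
| "gh la d a (Suc m) y = (if y = a then 0 else
     (\<Sum>i\<in>UNIV. ennreal (la i / totrate la d y) *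
                  (ennreal (1 / totrate la d y) * fh la d a m (up y i) + gh la d a m (up y i))
              + ennreal (d y i / totrate la d y) *
                  (ennreal (1 / totrate la d y) * fh la d a m (down y i) + gh la d a m (down y i))))"

text \<open>Probability of ever returning to a (after leaving it), started at a.\<close>
definition return_prob :: "('i::finite \<Rightarrow> real) \<Rightarrow> (('i \<Rightarrow> nat) \<Rightarrow> 'i \<Rightarrow> real) \<Rightarrow> ('i \<Rightarrow> nat) \<Rightarrow> ennreal" where
  "return_prob la d a =
     (\<Sum>i\<in>UNIV. ennreal (la i / totrate la d a) * (\<Sum>m. fh la d a m (up a i))
              + ennreal (d a i / totrate la d a) * (\<Sum>m. fh la d a m (down a i)))"

text \<open>Expected return time E_a[T_a 1{T_a<\<infinity>}], where
  T_a = inf {t \<ge> J_1. X_t = a}.\<close>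
definition return_time :: "('i::finite \<Rightarrow> real) \<Rightarrow> (('i \<Rightarrow> nat) \<Rightarrow> 'i \<Rightarrow> real) \<Rightarrow> ('i \<Rightarrow> nat) \<Rightarrow> ennreal" where
  "return_time la d a = ennreal (1 / totrate la d a) +
     (\<Sum>i\<in>UNIV. ennreal (la i / totrate la d a) * (\<Sum>m. gh la d a m (up a i))
              + ennreal (d a i / totrate la d a) * (\<Sum>m. gh la d a m (down a i)))"

definition transient_state :: "('i::finite \<Rightarrow> real) \<Rightarrow> (('i \<Rightarrow> nat) \<Rightarrow> 'i \<Rightarrow> real) \<Rightarrow> ('i \<Rightarrow> nat) \<Rightarrow> bool" where
  "transient_state la d a \<longleftrightarrow> return_prob la d a < 1"

definition pos_recurrent_state :: "('i::finite \<Rightarrow> real) \<Rightarrow> (('i \<Rightarrow> nat) \<Rightarrow> 'i \<Rightarrow> real) \<Rightarrow> ('i \<Rightarrow> nat) \<Rightarrow> bool" where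
  "pos_recurrent_state la d a \<longleftrightarrow> return_prob la d a = 1 \<and> return_time la d a < top"

definition dep_rate :: "('i \<Rightarrow> 'j::finite \<Rightarrow> real) \<Rightarrow> (('i \<Rightarrow> nat) \<Rightarrow> 'i \<Rightarrow> 'j \<Rightarrow> nat) \<Rightarrow> ('i \<Rightarrow> nat) \<Rightarrow> 'i \<Rightarrow> real" where
  "dep_rate mun z x i = (\<Sum>j\<in>UNIV. mun i j * real (z x i j))"

end

theory Submission
  imports Defs
begin

text \<open>By LP duality the value \<open>\<vartheta>\<close> has a dual certificate: weights \<open>w \<ge> 0\<close>, \<open>w \<noteq> 0\<close>, with
  \<open>w \<bullet> g(\<kappa>) \<le> \<vartheta> (w \<bullet> p)\<close> for every \<open>\<kappa>\<close> satisfying the server constraints, where \<open>g(\<kappa>)\<close> is the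
  class surplus.  Filling idle servers with fictitious work turns any work-conserving action into
  such a \<open>\<kappa>\<close>, so the linear function \<open>W x = \<Sum>\<^sub>i w\<^sub>i x\<^sub>i\<close> has drift at least
  \<open>-\<surd>n \<vartheta> (w \<bullet> p)\<close> under every such policy, in every state.

  If \<open>\<vartheta> < 0\<close> the drift is uniformly positive and the rates are bounded, so \<open>exp (-\<theta> W)\<close> is
  superharmonic for the jump chain when \<open>\<theta> > 0\<close> is small; comparing hitting probabilities with it
  shows that the chain escapes from any state with positive probability.  If \<open>\<vartheta> = 0\<close>, \<open>W\<close> is
  subharmonic; optional stopping at the return time (or after \<open>m\<close> jumps) together with a finite
  mean return time would force \<open>W (x + e\<^sub>i) \<le> W x\<close> for a class \<open>i\<close> with \<open>w\<^sub>i > 0\<close>.\<close>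

section \<open>Hitting probabilities and times of the jump chain\<close>

definition jump_mean :: "('i::finite \<Rightarrow> real) \<Rightarrow> (('i \<Rightarrow> nat) \<Rightarrow> 'i \<Rightarrow> real)
    \<Rightarrow> (('i \<Rightarrow> nat) \<Rightarrow> real) \<Rightarrow> ('i \<Rightarrow> nat) \<Rightarrow> real" where
  "jump_mean la d f y =
     (\<Sum>i\<in>UNIV. la i / totrate la d y * f (up y i) + d y i / totrate la d y * f (down y i))"

text \<open>Real-valued counterparts of \<open>fh\<close> and \<open>gh\<close>; \<open>hit_prob_within la d a m y\<close> is the
  probability that the jump chain started at \<open>y\<close> visits \<open>a\<close> within \<open>m\<close> jumps.\<close>

primrec first_hit_prob :: "('i::finite \<Rightarrow> real) \<Rightarrow> (('i \<Rightarrow> nat) \<Rightarrow> 'i \<Rightarrow> real) \<Rightarrow> ('i \<Rightarrow> nat)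
    \<Rightarrow> nat \<Rightarrow> ('i \<Rightarrow> nat) \<Rightarrow> real" where
  "first_hit_prob la d a 0 y = (if y = a then 1 else 0)"
| "first_hit_prob la d a (Suc m) y =
     (if y = a then 0 else jump_mean la d (first_hit_prob la d a m) y)"

primrec hit_prob_within :: "('i::finite \<Rightarrow> real) \<Rightarrow> (('i \<Rightarrow> nat) \<Rightarrow> 'i \<Rightarrow> real) \<Rightarrow> ('i \<Rightarrow> nat)
    \<Rightarrow> nat \<Rightarrow> ('i \<Rightarrow> nat) \<Rightarrow> real" where
  "hit_prob_within la d a 0 y = (if y = a then 1 else 0)"
| "hit_prob_within la d a (Suc m) y =
     (if y = a then 1 else jump_mean la d (hit_prob_within la d a m) y)"

primrec first_hit_time :: "('i::finite \<Rightarrow> real) \<Rightarrow> (('i \<Rightarrow> nat) \<Rightarrow> 'i \<Rightarrow> real) \<Rightarrow> ('i \<Rightarrow> nat)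
    \<Rightarrow> nat \<Rightarrow> ('i \<Rightarrow> nat) \<Rightarrow> real" where
  "first_hit_time la d a 0 y = 0"
| "first_hit_time la d a (Suc m) y = (if y = a then 0 else
     jump_mean la d (\<lambda>y'. first_hit_prob la d a m y' / totrate la d y + first_hit_time la d a m y') y)"

definition hit_prob :: "('i::finite \<Rightarrow> real) \<Rightarrow> (('i \<Rightarrow> nat) \<Rightarrow> 'i \<Rightarrow> real) \<Rightarrow> ('i \<Rightarrow> nat)
    \<Rightarrow> ('i \<Rightarrow> nat) \<Rightarrow> real" where
  "hit_prob la d a y = (\<Sum>m. first_hit_prob la d a m y)"

lemma ennreal_mult_add_mult:
  "0 \<le> a \<Longrightarrow> 0 \<le> x \<Longrightarrow> 0 \<le> b \<Longrightarrow> 0 \<le> y \<Longrightarrow>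
    ennreal a * ennreal x + ennreal b * ennreal y = ennreal (a * x + b * y)"
  by (subst ennreal_plus) (auto simp: ennreal_mult)

locale jump_chain =
  fixes la :: "'i::finite \<Rightarrow> real" and d :: "('i \<Rightarrow> nat) \<Rightarrow> 'i \<Rightarrow> real"
  assumes la_pos: "\<And>i. la i > 0"
    and d_nonneg: "\<And>x i. d x i \<ge> 0"
    and d_empty: "\<And>x i. x i = 0 \<Longrightarrow> d x i = 0"
begin

lemma totrate_pos: "totrate la d y > 0"
  unfolding totrate_def
  by (intro add_pos_nonneg sum_pos sum_nonneg) (auto intro: la_pos d_nonneg)

lemma totrate_le:
  assumes "\<And>x i. d x i \<le> D"
  shows "totrate la d y \<le> (\<Sum>i\<in>UNIV. la i) + real CARD('i) * D"
  using sum_bounded_above[of UNIV "d y" D] assms unfolding totrate_def by auto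

lemma jump_weights_nonneg: "la i / totrate la d y \<ge> 0" "d y i / totrate la d y \<ge> 0"
  using totrate_pos[of y] la_pos[of i] d_nonneg[of y i] by auto

lemma jump_mean_eq:
  "jump_mean la d f y = (\<Sum>i\<in>UNIV. la i * f (up y i) + d y i * f (down y i)) / totrate la d y"
  unfolding jump_mean_def sum_divide_distrib by (simp add: add_divide_distrib)

lemma jump_mean_const: "jump_mean la d (\<lambda>_. c) y = c"
proof -
  have "(\<Sum>i\<in>UNIV. la i * c + d y i * c) = c * totrate la d y"
    unfolding totrate_def by (simp add: sum.distrib sum_distrib_left algebra_simps)
  then show ?thesis using totrate_pos[of y] by (simp add: jump_mean_eq)
qed

lemma jump_mean_mono:
  assumes "\<And>i. f (up y i) \<le> g (up y i)" "\<And>i. f (down y i) \<le> g (down y i)"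
  shows "jump_mean la d f y \<le> jump_mean la d g y"
  unfolding jump_mean_def by (intro sum_mono add_mono mult_left_mono assms jump_weights_nonneg)

lemma jump_mean_strict_mono:
  assumes "\<And>i. f (up y i) \<le> g (up y i)" "\<And>i. f (down y i) \<le> g (down y i)"
    and "f (up y i0) < g (up y i0)"
  shows "jump_mean la d f y < jump_mean la d g y"
  unfolding jump_mean_def
proof (rule sum_strict_mono_ex1)
  show "\<forall>i\<in>UNIV. la i / totrate la d y * f (up y i) + d y i / totrate la d y * f (down y i)
      \<le> la i / totrate la d y * g (up y i) + d y i / totrate la d y * g (down y i)"
    by (intro ballI add_mono mult_left_mono assms jump_weights_nonneg)
  have "la i0 / totrate la d y > 0" using la_pos[of i0] totrate_pos[of y] by simp
  then have "la i0 / totrate la d y * f (up y i0) < la i0 / totrate la d y * g (up y i0)"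
    by (rule mult_strict_left_mono[OF assms(3)])
  moreover have "d y i0 / totrate la d y * f (down y i0) \<le> d y i0 / totrate la d y * g (down y i0)"
    by (intro mult_left_mono assms jump_weights_nonneg)
  ultimately show "\<exists>i\<in>UNIV. la i / totrate la d y * f (up y i) + d y i / totrate la d y * f (down y i)
      < la i / totrate la d y * g (up y i) + d y i / totrate la d y * g (down y i)"
    by (intro bexI[of _ i0] UNIV_I add_less_le_mono)
qed simp

lemma jump_mean_linear:
  "jump_mean la d (\<lambda>y'. \<alpha> * f y' + \<beta> * g y') y = \<alpha> * jump_mean la d f y + \<beta> * jump_mean la d g y"
  unfolding jump_mean_def by (simp add: sum.distrib sum_distrib_left algebra_simps)

lemma jump_mean_scale: "jump_mean la d (\<lambda>y'. \<alpha> * f y') y = \<alpha> * jump_mean la d f y"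
  using jump_mean_linear[of \<alpha> f 0 f y] by simp

lemma jump_mean_sum:
  "jump_mean la d (\<lambda>y'. \<Sum>k\<in>K. f k y') y = (\<Sum>k\<in>K. jump_mean la d (f k) y)"
  unfolding jump_mean_def by (simp add: sum_distrib_left sum.distrib sum.swap[of _ K UNIV])

lemma jump_mean_ennreal:
  assumes "\<And>y'. f y' \<ge> 0"
  shows "(\<Sum>i\<in>UNIV. ennreal (la i / totrate la d y) * ennreal (f (up y i))
                   + ennreal (d y i / totrate la d y) * ennreal (f (down y i)))
       = ennreal (jump_mean la d f y)"
proof -
  have "(\<Sum>i\<in>UNIV. ennreal (la i / totrate la d y) * ennreal (f (up y i))
                 + ennreal (d y i / totrate la d y) * ennreal (f (down y i)))
      = (\<Sum>i\<in>UNIV. ennreal (la i / totrate la d y * f (up y i) + d y i / totrate la d y * f (down y i)))"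
    by (intro sum.cong refl ennreal_mult_add_mult jump_weights_nonneg assms)
  also have "\<dots> = ennreal (jump_mean la d f y)"
    unfolding jump_mean_def
    by (intro sum_ennreal add_nonneg_nonneg mult_nonneg_nonneg jump_weights_nonneg assms)
  finally show ?thesis .
qed

lemma first_hit_prob_nonneg: "first_hit_prob la d a m y \<ge> 0"
proof (induction m arbitrary: y)
  case (Suc m)
  have "jump_mean la d (\<lambda>_. 0) y \<le> jump_mean la d (first_hit_prob la d a m) y"
    by (intro jump_mean_mono Suc.IH)
  then show ?case by (simp add: jump_mean_const)
qed simp

lemma fh_eq_first_hit_prob: "fh la d a m y = ennreal (first_hit_prob la d a m y)"
proof (induction m arbitrary: y)
  case (Suc m)
  then show ?case
    using jump_mean_ennreal[of "first_hit_prob la d a m" y] first_hit_prob_nonneg by simp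
qed simp

lemma hit_prob_within_eq_sum: "hit_prob_within la d a m y = (\<Sum>k<Suc m. first_hit_prob la d a k y)"
proof (induction m arbitrary: y)
  case (Suc m)
  have shift: "(\<Sum>k<Suc (Suc m). first_hit_prob la d a k y)
      = first_hit_prob la d a 0 y + (\<Sum>k<Suc m. first_hit_prob la d a (Suc k) y)"
    by (subst sum.lessThan_Suc_shift) simp
  show ?case
  proof (cases "y = a")
    case False
    have "hit_prob_within la d a m = (\<lambda>y'. \<Sum>k<Suc m. first_hit_prob la d a k y')"
      using Suc.IH by auto
    then have "jump_mean la d (hit_prob_within la d a m) y
        = (\<Sum>k<Suc m. jump_mean la d (first_hit_prob la d a k) y)"
      by (simp only: jump_mean_sum)
    also have "\<dots> = (\<Sum>k<Suc (Suc m). first_hit_prob la d a k y)"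
      unfolding shift using False by simp
    finally show ?thesis using False by simp
  qed (unfold shift, simp)
qed simp

lemma hit_prob_within_le_superharmonic:
  assumes "\<And>y. G y \<ge> 0" and "G a \<ge> 1"
    and "\<And>y. y \<noteq> a \<Longrightarrow> jump_mean la d G y \<le> G y"
  shows "hit_prob_within la d a m y \<le> G y"
proof (induction m arbitrary: y)
  case (Suc m)
  show ?case
  proof (cases "y = a")
    case False
    have "jump_mean la d (hit_prob_within la d a m) y \<le> jump_mean la d G y"
      by (intro jump_mean_mono Suc.IH)
    then show ?thesis using False assms(3)[OF False] by simp
  qed (use assms in simp)
qed (use assms in simp)

lemma hit_prob_within_le_1: "hit_prob_within la d a m y \<le> 1"
  using hit_prob_within_le_superharmonic[of "\<lambda>_. 1"] by (simp add: jump_mean_const)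

lemma
  assumes "\<And>y. G y \<ge> 0" and "G a \<ge> 1"
    and "\<And>y. y \<noteq> a \<Longrightarrow> jump_mean la d G y \<le> G y"
  shows summable_first_hit_prob_superharmonic: "summable (\<lambda>m. first_hit_prob la d a m y)"
    and hit_prob_le_superharmonic: "hit_prob la d a y \<le> G y"
proof -
  have partial: "(\<Sum>k<m. first_hit_prob la d a k y) \<le> G y" for m
  proof -
    have "(\<Sum>k<m. first_hit_prob la d a k y) \<le> (\<Sum>k<Suc m. first_hit_prob la d a k y)"
      by (simp add: first_hit_prob_nonneg)
    also have "\<dots> \<le> G y"
      unfolding hit_prob_within_eq_sum[symmetric]
      by (rule hit_prob_within_le_superharmonic[OF assms])
    finally show ?thesis .
  qed
  show s: "summable (\<lambda>m. first_hit_prob la d a m y)"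
    by (rule summableI_nonneg_bounded[OF first_hit_prob_nonneg partial])
  show "hit_prob la d a y \<le> G y"
    unfolding hit_prob_def by (rule suminf_le_const[OF s partial])
qed

lemma summable_first_hit_prob: "summable (\<lambda>m. first_hit_prob la d a m y)"
  using summable_first_hit_prob_superharmonic[of "\<lambda>_. 1"] by (simp add: jump_mean_const)

lemma hit_prob_le_1: "hit_prob la d a y \<le> 1"
  using hit_prob_le_superharmonic[of "\<lambda>_. 1"] by (simp add: jump_mean_const)

lemma hit_prob_nonneg: "hit_prob la d a y \<ge> 0"
  unfolding hit_prob_def by (intro suminf_nonneg summable_first_hit_prob first_hit_prob_nonneg)

lemma hit_prob_within_tendsto: "(\<lambda>m. hit_prob_within la d a m y) \<longlonglongrightarrow> hit_prob la d a y"
  unfolding hit_prob_within_eq_sum hit_prob_def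
  using LIMSEQ_Suc[OF summable_LIMSEQ[OF summable_first_hit_prob]] .

lemma return_prob_eq: "return_prob la d a = ennreal (jump_mean la d (hit_prob la d a) a)"
proof -
  have "(\<Sum>m. fh la d a m y) = ennreal (hit_prob la d a y)" for y
    unfolding fh_eq_first_hit_prob hit_prob_def
    by (intro suminf_ennreal2 first_hit_prob_nonneg summable_first_hit_prob)
  then show ?thesis
    unfolding return_prob_def by (simp add: jump_mean_ennreal hit_prob_nonneg)
qed

lemma first_hit_time_nonneg: "first_hit_time la d a m y \<ge> 0"
proof (induction m arbitrary: y)
  case (Suc m)
  have "jump_mean la d (\<lambda>_. 0) y
      \<le> jump_mean la d (\<lambda>y'. first_hit_prob la d a m y' / totrate la d y + first_hit_time la d a m y') y"
    using first_hit_prob_nonneg Suc.IH totrate_pos[of y]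
    by (intro jump_mean_mono) (auto intro!: add_nonneg_nonneg divide_nonneg_pos)
  then show ?case by (simp add: jump_mean_const)
qed simp

lemma gh_eq_first_hit_time: "gh la d a m y = ennreal (first_hit_time la d a m y)"
proof (induction m arbitrary: y)
  case (Suc m)
  have "ennreal (1 / totrate la d y) * fh la d a m y' + gh la d a m y'
      = ennreal (first_hit_prob la d a m y' / totrate la d y + first_hit_time la d a m y')" for y'
    unfolding fh_eq_first_hit_prob Suc.IH
    using totrate_pos[of y] first_hit_prob_nonneg[of a m y'] first_hit_time_nonneg[of a m y']
    by (subst ennreal_plus) (auto simp: ennreal_mult[symmetric])
  moreover have "first_hit_prob la d a m y' / totrate la d y + first_hit_time la d a m y' \<ge> 0" for y'
    using first_hit_prob_nonneg first_hit_time_nonneg totrate_pos[of y] by simp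
  ultimately show ?case
    using jump_mean_ennreal[of "\<lambda>y'. first_hit_prob la d a m y' / totrate la d y + first_hit_time la d a m y'" y]
    by simp
qed simp

text \<open>The first hit at jump \<open>m\<close> takes \<open>m\<close> holding times, each of mean at least \<open>1/R\<close>.\<close>

lemma first_hit_prob_le_first_hit_time:
  assumes R: "\<And>y. totrate la d y \<le> R"
  shows "real m / R * first_hit_prob la d a m y \<le> first_hit_time la d a m y"
proof (induction m arbitrary: y)
  case (Suc m)
  show ?case
  proof (cases "y = a")
    case False
    have step: "real (Suc m) / R * first_hit_prob la d a m y'
        \<le> first_hit_prob la d a m y' / totrate la d y + first_hit_time la d a m y'" for y'
    proof -
      have "first_hit_prob la d a m y' / R \<le> first_hit_prob la d a m y' / totrate la d y"
        using first_hit_prob_nonneg R[of y] totrate_pos[of y] by (intro divide_left_mono) auto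
      then show ?thesis using Suc.IH[of y'] by (simp add: add_divide_distrib algebra_simps)
    qed
    have "real (Suc m) / R * first_hit_prob la d a (Suc m) y
        = jump_mean la d (\<lambda>y'. real (Suc m) / R * first_hit_prob la d a m y') y"
      using False by (simp only: jump_mean_scale first_hit_prob.simps if_False)
    also have "\<dots> \<le> jump_mean la d
        (\<lambda>y'. first_hit_prob la d a m y' / totrate la d y + first_hit_time la d a m y') y"
      by (intro jump_mean_mono step)
    also have "\<dots> = first_hit_time la d a (Suc m) y"
      using False by simp
    finally show ?thesis .
  qed simp
qed simp

end

section \<open>Linear Lyapunov functions\<close>

definition weighted_count :: "('i::finite \<Rightarrow> real) \<Rightarrow> ('i \<Rightarrow> nat) \<Rightarrow> real" where
  "weighted_count w x = (\<Sum>i\<in>UNIV. w i * real (x i))"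

lemma weighted_count_up: "weighted_count w (up y i) = weighted_count w y + w i"
proof -
  have "weighted_count w (up y i) = (\<Sum>k\<in>UNIV. w k * real (y k) + (if k = i then w i else 0))"
    unfolding weighted_count_def up_def by (intro sum.cong) (auto simp: algebra_simps)
  then show ?thesis by (simp add: sum.distrib weighted_count_def)
qed

lemma weighted_count_down: "y i \<ge> 1 \<Longrightarrow> weighted_count w (down y i) = weighted_count w y - w i"
proof -
  assume "y i \<ge> 1"
  then have "weighted_count w (down y i) = (\<Sum>k\<in>UNIV. w k * real (y k) - (if k = i then w i else 0))"
    unfolding weighted_count_def down_def by (intro sum.cong) (auto simp: algebra_simps of_nat_diff)
  then show ?thesis by (simp add: sum_subtractf weighted_count_def)
qed

lemma down_eq_self: "y i = 0 \<Longrightarrow> down y i = y"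
  unfolding down_def by auto

locale drift_chain = jump_chain la d for la :: "'i::finite \<Rightarrow> real" and d +
  fixes w :: "'i \<Rightarrow> real" and \<delta> :: real
  assumes w_nonneg: "\<And>i. w i \<ge> 0"
    and drift_ge: "\<And>x. (\<Sum>i\<in>UNIV. w i * (la i - d x i)) \<ge> \<delta>"
begin

lemma d_mult_weighted_count_down: "d y i * weighted_count w (down y i) = d y i * (weighted_count w y - w i)"
  by (cases "y i = 0") (auto simp: d_empty weighted_count_down)

lemma weighted_count_down_le: "weighted_count w (down y i) \<le> weighted_count w y"
  using w_nonneg[of i] by (cases "y i = 0") (auto simp: down_eq_self weighted_count_down)

lemma jump_mean_weighted_count:
  "jump_mean la d (weighted_count w) y
     = weighted_count w y + (\<Sum>i\<in>UNIV. w i * (la i - d y i)) / totrate la d y"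
proof -
  have "(\<Sum>i\<in>UNIV. la i * weighted_count w (up y i) + d y i * weighted_count w (down y i))
      = (\<Sum>i\<in>UNIV. weighted_count w y * (la i + d y i) + w i * (la i - d y i))"
    by (intro sum.cong refl) (simp add: weighted_count_up d_mult_weighted_count_down algebra_simps)
  also have "\<dots> = weighted_count w y * totrate la d y + (\<Sum>i\<in>UNIV. w i * (la i - d y i))"
    unfolding totrate_def by (simp add: sum.distrib sum_distrib_left[symmetric] distrib_left)
  finally show ?thesis using totrate_pos[of y] by (simp add: jump_mean_eq field_simps)
qed

lemma weighted_count_le_jump_mean: "\<delta> \<ge> 0 \<Longrightarrow> weighted_count w y \<le> jump_mean la d (weighted_count w) y"
  using jump_mean_weighted_count[of y] drift_ge[of y] totrate_pos[of y]
  by (simp add: divide_nonneg_pos)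

text \<open>Optional stopping for the submartingale \<open>weighted_count w\<close>, stopped at \<open>a\<close> or after
  \<open>m\<close> jumps, each of which raises it by at most \<open>c\<close>.\<close>

lemma weighted_count_le_stopped:
  assumes "\<delta> \<ge> 0" and c: "\<And>i. w i \<le> c"
  shows "weighted_count w y \<le> weighted_count w a * hit_prob_within la d a m y
           + (weighted_count w y + real m * c) * (1 - hit_prob_within la d a m y)"
proof (induction m arbitrary: y)
  case (Suc m)
  show ?case
  proof (cases "y = a")
    case False
    let ?K = "hit_prob_within la d a m" and ?B = "weighted_count w y + real (Suc m) * c"
    have K_le_1: "1 - ?K y' \<ge> 0" for y' using hit_prob_within_le_1[of a m y'] by simp
    have "weighted_count w y \<le> jump_mean la d (weighted_count w) y"
      using weighted_count_le_jump_mean assms(1) by blast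
    also have "\<dots> \<le> jump_mean la d
        (\<lambda>y'. weighted_count w a * ?K y' + (weighted_count w y' + real m * c) * (1 - ?K y')) y"
      by (intro jump_mean_mono Suc.IH)
    also have "\<dots> \<le> jump_mean la d (\<lambda>y'. weighted_count w a * ?K y' + ?B * (1 - ?K y')) y"
    proof (intro jump_mean_mono)
      fix i
      show "weighted_count w a * ?K (up y i) + (weighted_count w (up y i) + real m * c) * (1 - ?K (up y i))
          \<le> weighted_count w a * ?K (up y i) + ?B * (1 - ?K (up y i))"
        using K_le_1[of "up y i"] c[of i]
        by (intro add_left_mono mult_right_mono) (auto simp: weighted_count_up algebra_simps)
      show "weighted_count w a * ?K (down y i) + (weighted_count w (down y i) + real m * c) * (1 - ?K (down y i))
          \<le> weighted_count w a * ?K (down y i) + ?B * (1 - ?K (down y i))"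
        using K_le_1[of "down y i"] c[of i] w_nonneg[of i] weighted_count_down_le[of y i]
        by (intro add_left_mono mult_right_mono) (auto simp: algebra_simps)
    qed
    also have "\<dots> = (weighted_count w a - ?B) * jump_mean la d ?K y + ?B"
      using jump_mean_linear[of "weighted_count w a - ?B" ?K ?B "\<lambda>_. 1" y]
      by (simp add: jump_mean_const algebra_simps)
    finally show ?thesis using False by (simp add: algebra_simps)
  qed simp
qed simp

end

lemma exp_minus_le: "0 \<le> (t::real) \<Longrightarrow> exp (- t) \<le> 1 - t + t\<^sup>2"
proof -
  assume t: "0 \<le> t"
  have "exp (- t) = 1 / exp t" by (simp add: exp_minus field_simps)
  also have "\<dots> \<le> 1 / (1 + t)"
    using t exp_ge_add_one_self[of t] by (intro divide_left_mono) auto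
  also have "\<dots> \<le> 1 - t + t\<^sup>2"
  proof -
    have "1 \<le> (1 + t) * (1 - t + t\<^sup>2)"
      using t by (simp add: algebra_simps power2_eq_square power3_eq_cube[symmetric])
    then show ?thesis using t by (simp add: divide_le_eq mult.commute)
  qed
  finally show ?thesis .
qed

context drift_chain
begin

text \<open>Second-order expansion of \<open>exp\<close>: the drift \<open>\<delta>\<close> dominates the quadratic error
  once \<open>\<theta>\<close> is small.\<close>

lemma exp_weighted_count_superharmonic:
  assumes \<theta>: "\<theta> > 0" "\<And>i. \<theta> * w i \<le> 1"
    and D: "\<And>x i. d x i \<le> D" and small: "\<theta> * (\<Sum>i\<in>UNIV. (la i + D) * (w i)\<^sup>2) \<le> \<delta>"
  shows "jump_mean la d (\<lambda>y'. exp (- \<theta> * weighted_count w y')) y \<le> exp (- \<theta> * weighted_count w y)"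
proof -
  let ?F = "\<lambda>y'. exp (- \<theta> * weighted_count w y')"
  let ?C = "\<Sum>i\<in>UNIV. (la i + D) * (w i)\<^sup>2"
  have t0: "0 \<le> \<theta> * w i" for i using \<theta>(1) w_nonneg[of i] by simp
  have "(\<Sum>i\<in>UNIV. la i * exp (- (\<theta> * w i)) + d y i * exp (\<theta> * w i))
      \<le> (\<Sum>i\<in>UNIV. la i * (1 - \<theta> * w i + (\<theta> * w i)\<^sup>2) + d y i * (1 + \<theta> * w i + (\<theta> * w i)\<^sup>2))"
    using la_pos d_nonneg t0 \<theta>(2) exp_minus_le exp_bound
    by (intro sum_mono add_mono mult_left_mono) (auto intro: less_imp_le)
  also have "\<dots> = totrate la d y - \<theta> * (\<Sum>i\<in>UNIV. w i * (la i - d y i))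
                    + \<theta>\<^sup>2 * (\<Sum>i\<in>UNIV. (la i + d y i) * (w i)\<^sup>2)"
    unfolding totrate_def
    by (simp add: sum.distrib sum_distrib_left sum_subtractf algebra_simps power2_eq_square)
  also have "\<dots> \<le> totrate la d y - \<theta> * \<delta> + \<theta>\<^sup>2 * ?C"
  proof -
    have "\<theta> * \<delta> \<le> \<theta> * (\<Sum>i\<in>UNIV. w i * (la i - d y i))"
      using drift_ge[of y] \<theta>(1) by simp
    moreover have "(\<Sum>i\<in>UNIV. (la i + d y i) * (w i)\<^sup>2) \<le> ?C"
      using D by (intro sum_mono mult_right_mono) auto
    then have "\<theta>\<^sup>2 * (\<Sum>i\<in>UNIV. (la i + d y i) * (w i)\<^sup>2) \<le> \<theta>\<^sup>2 * ?C"
      by (rule mult_left_mono) simp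
    ultimately show ?thesis by linarith
  qed
  also have "\<dots> \<le> totrate la d y"
    using mult_left_mono[OF small less_imp_le[OF \<theta>(1)]] by (simp add: power2_eq_square mult.assoc)
  finally have key: "(\<Sum>i\<in>UNIV. la i * exp (- (\<theta> * w i)) + d y i * exp (\<theta> * w i)) \<le> totrate la d y" .
  have "d y i * ?F (down y i) = d y i * (?F y * exp (\<theta> * w i))" for i
    by (cases "y i = 0") (auto simp: d_empty weighted_count_down algebra_simps exp_add[symmetric])
  then have "(\<Sum>i\<in>UNIV. la i * ?F (up y i) + d y i * ?F (down y i))
      = ?F y * (\<Sum>i\<in>UNIV. la i * exp (- (\<theta> * w i)) + d y i * exp (\<theta> * w i))"
    by (simp add: sum_distrib_left weighted_count_up algebra_simps exp_add[symmetric] exp_diff)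
  then show ?thesis
    using key totrate_pos[of y] by (simp add: jump_mean_eq divide_le_eq)
qed

lemma exists_exp_weighted_count_superharmonic:
  assumes "\<delta> > 0" and D: "\<And>x i. d x i \<le> D"
  obtains \<theta> where "\<theta> > 0"
    "\<And>y. jump_mean la d (\<lambda>y'. exp (- \<theta> * weighted_count w y')) y \<le> exp (- \<theta> * weighted_count w y)"
proof -
  define c where "c = (\<Sum>i\<in>UNIV. w i)"
  define C where "C = (\<Sum>i\<in>UNIV. (la i + D) * (w i)\<^sup>2)"
  define \<theta> where "\<theta> = min (1 / (c + 1)) (\<delta> / (C + 1))"
  have wc: "w i \<le> c" for i unfolding c_def by (rule member_le_sum) (auto simp: w_nonneg)
  have c0: "c \<ge> 0" unfolding c_def by (simp add: sum_nonneg w_nonneg)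
  have "D \<ge> 0" using D[of undefined undefined] d_nonneg[of undefined undefined] by linarith
  then have C0: "C \<ge> 0" unfolding C_def using la_pos by (intro sum_nonneg) (simp add: less_imp_le)
  have \<theta>0: "\<theta> > 0" unfolding \<theta>_def using c0 C0 assms(1) by auto
  have "\<theta> * w i \<le> 1" for i
  proof -
    have "\<theta> * w i \<le> 1 / (c + 1) * (c + 1)"
      using \<theta>0 wc[of i] c0 w_nonneg[of i] by (intro mult_mono) (auto simp: \<theta>_def)
    then show ?thesis using c0 by simp
  qed
  moreover have "\<theta> * C \<le> \<delta>"
  proof -
    have "\<theta> * C \<le> \<delta> / (C + 1) * C" unfolding \<theta>_def using C0 by (intro mult_right_mono) auto
    also have "\<dots> \<le> \<delta>" using C0 assms(1) by (simp add: field_simps)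
    finally show ?thesis .
  qed
  ultimately show ?thesis
    using that[OF \<theta>0] exp_weighted_count_superharmonic[OF \<theta>0 _ D] unfolding C_def by blast
qed

end

context jump_chain
begin

lemma transient_if_superharmonic:
  assumes "\<And>y. G y \<ge> 0" "\<And>y. G y \<le> 1" "G a = 1"
    and "\<And>y. y \<noteq> a \<Longrightarrow> jump_mean la d G y \<le> G y"
    and "G (up a i0) < 1"
  shows "transient_state la d a"
proof -
  have "jump_mean la d (hit_prob la d a) a \<le> jump_mean la d G a"
    using assms(1-4) by (intro jump_mean_mono hit_prob_le_superharmonic) auto
  also have "\<dots> < jump_mean la d (\<lambda>_. 1) a"
    using assms(2,5) by (intro jump_mean_strict_mono[of G a "\<lambda>_. 1" i0]) auto
  finally show ?thesis
    unfolding transient_state_def return_prob_eq by (simp add: jump_mean_const)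
qed

lemma hit_prob_up_eq_1:
  assumes "return_prob la d a = 1"
  shows "hit_prob la d a (up a i) = 1"
proof (rule ccontr)
  assume "hit_prob la d a (up a i) \<noteq> 1"
  then have "hit_prob la d a (up a i) < 1" using hit_prob_le_1 less_eq_real_def by blast
  then have "jump_mean la d (hit_prob la d a) a < jump_mean la d (\<lambda>_. 1) a"
    by (intro jump_mean_strict_mono hit_prob_le_1)
  then show False using assms by (simp add: return_prob_eq jump_mean_const)
qed

lemma summable_hit_time_moment:
  assumes R: "\<And>y. totrate la d y \<le> R" and "return_time la d a < top"
  shows "summable (\<lambda>m. real m * first_hit_prob la d a m (up a i))"
proof -
  let ?q = "la i / totrate la d a"
  have q0: "?q > 0" using la_pos[of i] totrate_pos[of a] by simp
  have "ennreal ?q * (\<Sum>m. gh la d a m (up a i)) \<le> return_time la d a"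
  proof -
    let ?t = "\<lambda>i. ennreal (la i / totrate la d a) * (\<Sum>m. gh la d a m (up a i))
              + ennreal (d a i / totrate la d a) * (\<Sum>m. gh la d a m (down a i))"
    have "ennreal ?q * (\<Sum>m. gh la d a m (up a i)) \<le> ?t i" by simp
    also have "\<dots> \<le> (\<Sum>i\<in>UNIV. ?t i)" by (rule member_le_sum) auto
    also have "\<dots> \<le> return_time la d a" unfolding return_time_def by simp
    finally show ?thesis .
  qed
  with assms(2) have "(\<Sum>m. ennreal (first_hit_time la d a m (up a i))) \<noteq> top"
    using q0 ennreal_eq_0_iff[of ?q] unfolding gh_eq_first_hit_time by (auto simp: top_unique)
  then have time: "summable (\<lambda>m. first_hit_time la d a m (up a i))"
    by (intro summable_suminf_not_top first_hit_time_nonneg)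
  have R0: "R > 0" using R[of a] totrate_pos[of a] by linarith
  show ?thesis
  proof (rule summable_comparison_test'[OF summable_mult[OF time, of R]])
    fix m :: nat
    have "real m / R * first_hit_prob la d a m (up a i) \<le> first_hit_time la d a m (up a i)"
      by (rule first_hit_prob_le_first_hit_time[OF R])
    then show "norm (real m * first_hit_prob la d a m (up a i)) \<le> R * first_hit_time la d a m (up a i)"
      using R0 first_hit_prob_nonneg by (simp add: field_simps)
  qed
qed

end

lemma tail_moment_tendsto_zero:
  fixes f :: "nat \<Rightarrow> real"
  assumes f0: "\<And>m. f m \<ge> 0" and moment: "summable (\<lambda>m. real m * f m)"
  shows "(\<lambda>m. real m * (\<Sum>k. f (k + Suc m))) \<longlonglongrightarrow> 0"
proof -
  have "summable (\<lambda>m. real (Suc m) * f (Suc m))"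
    using summable_ignore_initial_segment[OF moment, of 1] by simp
  then have "summable (\<lambda>m. f (Suc m))"
  proof (rule summable_comparison_test'[where N = 0])
    show "norm (f (Suc m)) \<le> real (Suc m) * f (Suc m)" for m
      using f0[of "Suc m"] by (simp add: algebra_simps)
  qed
  then have tail: "summable (\<lambda>k. f (k + m))" for m
    by (simp add: summable_Suc_iff summable_ignore_initial_segment)
  define M where "M = (\<Sum>m. real m * f m)"
  have bound: "real m * (\<Sum>k. f (k + Suc m)) \<le> M - (\<Sum>k<Suc m. real k * f k)" for m
  proof -
    have "real m * (\<Sum>k. f (k + Suc m)) = (\<Sum>k. real m * f (k + Suc m))"
      by (rule suminf_mult[OF tail, symmetric])
    also have "\<dots> \<le> (\<Sum>k. real (k + Suc m) * f (k + Suc m))"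
    proof (rule suminf_le)
      show "real m * f (k + Suc m) \<le> real (k + Suc m) * f (k + Suc m)" for k
        using f0 by (intro mult_right_mono) auto
      show "summable (\<lambda>k. real m * f (k + Suc m))" by (rule summable_mult[OF tail])
      show "summable (\<lambda>k. real (k + Suc m) * f (k + Suc m))"
        by (rule summable_ignore_initial_segment[OF moment])
    qed
    also have "\<dots> = M - (\<Sum>k<Suc m. real k * f k)"
      using suminf_split_initial_segment[OF moment, of "Suc m"] unfolding M_def by simp
    finally show ?thesis .
  qed
  have "(\<lambda>m. \<Sum>k<Suc m. real k * f k) \<longlonglongrightarrow> M"
    unfolding M_def by (rule LIMSEQ_Suc[OF summable_LIMSEQ[OF moment]])
  from tendsto_diff[OF tendsto_const[of M] this]
  have upper: "(\<lambda>m. M - (\<Sum>k<Suc m. real k * f k)) \<longlonglongrightarrow> 0" by simp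
  show ?thesis
  proof (rule real_tendsto_sandwich[OF _ _ tendsto_const upper])
    show "\<forall>\<^sub>F m in sequentially. 0 \<le> real m * (\<Sum>k. f (k + Suc m))"
      using f0 by (intro always_eventually allI mult_nonneg_nonneg suminf_nonneg tail) auto
    show "\<forall>\<^sub>F m in sequentially. real m * (\<Sum>k. f (k + Suc m)) \<le> M - (\<Sum>k<Suc m. real k * f k)"
      using bound by simp
  qed
qed

context drift_chain
begin

lemma transient_if_positive_drift:
  assumes "\<delta> > 0" and "\<And>x i. d x i \<le> D" and "w i0 > 0"
  shows "transient_state la d a"
proof -
  obtain \<theta> where \<theta>: "\<theta> > 0"
    and super: "\<And>y. jump_mean la d (\<lambda>y'. exp (- \<theta> * weighted_count w y')) y \<le> exp (- \<theta> * weighted_count w y)"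
    using exists_exp_weighted_count_superharmonic[OF assms(1,2)] by blast
  define F where "F y = exp (\<theta> * weighted_count w a) * exp (- \<theta> * weighted_count w y)" for y
  have F_super: "jump_mean la d F y \<le> F y" for y
    unfolding F_def jump_mean_scale by (rule mult_left_mono[OF super]) simp
  have "jump_mean la d (\<lambda>y. min 1 (F y)) y \<le> min 1 (F y)" for y
  proof (rule min.boundedI)
    show "jump_mean la d (\<lambda>y. min 1 (F y)) y \<le> 1"
      using jump_mean_mono[of "\<lambda>y. min 1 (F y)" y "\<lambda>_. 1"] by (simp add: jump_mean_const)
    show "jump_mean la d (\<lambda>y. min 1 (F y)) y \<le> F y"
      using jump_mean_mono[of "\<lambda>y. min 1 (F y)" y F] F_super[of y] by simp
  qed
  moreover have "F a = 1"
    by (simp add: F_def exp_add[symmetric])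
  moreover have "F (up a i0) < 1"
    using \<theta> assms(3) by (simp add: F_def weighted_count_up exp_add[symmetric] algebra_simps)
  ultimately show ?thesis
    by (intro transient_if_superharmonic[of "\<lambda>y. min 1 (F y)" a i0]) (auto simp: F_def)
qed

text \<open>If the mean return time were finite, the mass \<open>1 - K m\<close> still undecided after \<open>m\<close> jumps
  would be \<open>o(1/m)\<close>, so the stopping estimate would give \<open>weighted_count w (up a i0) \<le>
  weighted_count w a\<close> in the limit.\<close>

lemma not_pos_recurrent_if_nonneg_drift:
  assumes "\<delta> \<ge> 0" and D: "\<And>x i. d x i \<le> D" and "w i0 > 0"
  shows "\<not> pos_recurrent_state la d a"
proof
  assume "pos_recurrent_state la d a"
  then have ret: "return_prob la d a = 1" and time: "return_time la d a < top"
    unfolding pos_recurrent_state_def by auto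
  define y0 where "y0 = up a i0"
  define K where "K m = hit_prob_within la d a m y0" for m
  define f where "f m = first_hit_prob la d a m y0" for m
  have "hit_prob la d a y0 = 1" unfolding y0_def by (rule hit_prob_up_eq_1[OF ret])
  then have K_lim: "K \<longlonglongrightarrow> 1" unfolding K_def using hit_prob_within_tendsto by metis
  have "1 - K m = (\<Sum>k. f (k + Suc m))" for m
    using suminf_split_initial_segment[OF summable_first_hit_prob, of a y0 "Suc m"] \<open>hit_prob la d a y0 = 1\<close>
    unfolding K_def f_def hit_prob_within_eq_sum hit_prob_def by simp
  moreover have "summable (\<lambda>m. real m * f m)"
    unfolding f_def y0_def by (rule summable_hit_time_moment[OF totrate_le[OF D] time])
  ultimately have tail_lim: "(\<lambda>m. real m * (1 - K m)) \<longlonglongrightarrow> 0"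
    using tail_moment_tendsto_zero[of f] first_hit_prob_nonneg unfolding f_def by simp
  define c where "c = (\<Sum>i\<in>UNIV. w i)"
  have "w i \<le> c" for i unfolding c_def by (rule member_le_sum) (auto simp: w_nonneg)
  then have "w i0 * K m \<le> c * (real m * (1 - K m))" for m
    using weighted_count_le_stopped[OF assms(1), of c y0 a m]
    unfolding K_def y0_def weighted_count_up by (simp add: algebra_simps)
  then have "w i0 * 1 \<le> c * 0"
    by (intro LIMSEQ_le[OF tendsto_mult[OF tendsto_const K_lim] tendsto_mult[OF tendsto_const tail_lim]])
      auto
  then show False using assms(3) by simp
qed

end

section \<open>Dual multipliers of the LP\<close>

lemma bounded_below_on_upper_orthant:
  fixes a c :: "real^'i"
  assumes bound: "\<And>y. \<forall>i. c $ i < y $ i \<Longrightarrow> b \<le> a \<bullet> y"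
  shows "\<forall>i. 0 \<le> a $ i" and "b \<le> a \<bullet> c"
proof -
  show nonneg: "\<forall>i. 0 \<le> a $ i"
  proof (rule allI, rule ccontr)
    fix i assume "\<not> 0 \<le> a $ i"
    define c' where "c' = c + (\<chi> k. 1)"
    define t where "t = (\<bar>a \<bullet> c' - b\<bar> + 1) / - a $ i"
    have "t > 0" unfolding t_def using \<open>\<not> 0 \<le> a $ i\<close> by (intro divide_pos_pos) auto
    then have "\<forall>k. c $ k < (c' + t *\<^sub>R axis i 1) $ k" by (simp add: c'_def axis_def)
    moreover have "a \<bullet> (c' + t *\<^sub>R axis i 1) = a \<bullet> c' + t * a $ i"
      by (simp add: inner_add_right inner_axis)
    moreover have "t * a $ i = - (\<bar>a \<bullet> c' - b\<bar> + 1)"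
      unfolding t_def using \<open>\<not> 0 \<le> a $ i\<close> by simp
    ultimately show False using bound by fastforce
  qed
  show "b \<le> a \<bullet> c"
  proof (rule field_le_epsilon)
    fix e :: real assume "e > 0"
    define s where "s = (\<Sum>i\<in>UNIV. a $ i)"
    have "s \<ge> 0" unfolding s_def using nonneg by (simp add: sum_nonneg)
    have "b \<le> a \<bullet> (c + (e / (s + 1)) *\<^sub>R (\<chi> k. 1))"
      using \<open>e > 0\<close> \<open>s \<ge> 0\<close> by (intro bound) simp
    also have "\<dots> = a \<bullet> c + e * (s / (s + 1))"
      by (simp add: s_def inner_vec_def sum.distrib sum_distrib_left sum_divide_distrib algebra_simps)
    also have "\<dots> \<le> a \<bullet> c + e"
      using \<open>e > 0\<close> \<open>s \<ge> 0\<close> by (simp add: field_simps)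
    finally show "b \<le> a \<bullet> c + e" .
  qed
qed

text \<open>Separate \<open>G\<close> from the open orthant above \<open>v p\<close>.\<close>

lemma lp_dual_weights:
  fixes G :: "(real^'i) set" and p :: "real^'i"
  assumes "convex G" "g0 \<in> G"
    and opt: "\<forall>g\<in>G. \<forall>t. (\<forall>i. t * p $ i \<le> g $ i) \<longrightarrow> t \<le> v"
    and p_pos: "\<And>i. p $ i > 0"
  obtains w where "\<And>i. w $ i \<ge> 0" "w \<noteq> 0" "\<And>g. g \<in> G \<Longrightarrow> w \<bullet> g \<le> v * (w \<bullet> p)"
proof -
  define T where "T = {y :: real^'i. \<forall>i. (v *\<^sub>R p) $ i < y $ i}"
  have "T = (\<Inter>i. {y. axis i 1 \<bullet> y > v * p $ i})"
    by (auto simp: T_def inner_axis')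
  then have "convex T" by (simp add: convex_INT convex_halfspace_gt)
  have "v *\<^sub>R p + (\<chi> i. 1) \<in> T" by (simp add: T_def)
  have "G \<inter> T = {}"
  proof (rule ccontr)
    assume "G \<inter> T \<noteq> {}"
    then obtain g where "g \<in> G" and gT: "\<And>i. g $ i > v * p $ i" by (auto simp: T_def)
    define \<epsilon> where "\<epsilon> = Min (range (\<lambda>i. (g $ i - v * p $ i) / p $ i))"
    have "\<epsilon> > 0" unfolding \<epsilon>_def using gT p_pos by (auto simp: Min_gr_iff)
    moreover have "(v + \<epsilon>) * p $ i \<le> g $ i" for i
    proof -
      have "\<epsilon> \<le> (g $ i - v * p $ i) / p $ i" unfolding \<epsilon>_def by (rule Min_le) auto
      then show ?thesis using p_pos[of i] by (simp add: pos_le_divide_eq algebra_simps)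
    qed
    ultimately show False using opt \<open>g \<in> G\<close> by force
  qed
  then obtain a b where "a \<noteq> 0" and aG: "\<And>g. g \<in> G \<Longrightarrow> a \<bullet> g \<le> b"
    and aT: "\<And>y. y \<in> T \<Longrightarrow> a \<bullet> y \<ge> b"
    using separating_hyperplane_sets[OF assms(1) \<open>convex T\<close>] \<open>g0 \<in> G\<close> \<open>_ \<in> T\<close> by blast
  have "\<forall>i. 0 \<le> a $ i" and "b \<le> v * (a \<bullet> p)"
    using bounded_below_on_upper_orthant[of "v *\<^sub>R p" b a] aT by (auto simp: T_def)
  then show ?thesis using that[of a] aG \<open>a \<noteq> 0\<close> by force
qed

definition kappa_set ::
  "('i::finite \<times> 'j::finite) set \<Rightarrow> (nat \<Rightarrow> 'i \<Rightarrow> 'j \<Rightarrow> real) \<Rightarrow> ('i \<Rightarrow> 'j \<Rightarrow> real)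
   \<Rightarrow> (nat \<Rightarrow> 'j \<Rightarrow> nat) \<Rightarrow> ('j \<Rightarrow> real) \<Rightarrow> ('i \<Rightarrow> 'j \<Rightarrow> real) \<Rightarrow> nat \<Rightarrow> ('i \<Rightarrow> 'j \<Rightarrow> real) set" where
  "kappa_set E mu mu0 N nu \<xi>s n = {\<kappa>. (\<forall>i j. (i, j) \<notin> E \<longrightarrow> \<kappa> i j = 0) \<and>
     (\<forall>j. (\<Sum>i\<in>{i. (i, j) \<in> E}. \<kappa> i j) = theta E mu mu0 N nu \<xi>s n j)}"

definition kappa_surplus ::
  "('i::finite \<times> 'j::finite) set \<Rightarrow> (nat \<Rightarrow> 'i \<Rightarrow> real) \<Rightarrow> ('i \<Rightarrow> real) \<Rightarrow> (nat \<Rightarrow> 'i \<Rightarrow> 'j \<Rightarrow> real)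
   \<Rightarrow> nat \<Rightarrow> ('i \<Rightarrow> 'j \<Rightarrow> real) \<Rightarrow> real^'i" where
  "kappa_surplus E lam lam0 mu n \<kappa> =
     (\<chi> i. (\<Sum>j\<in>{j. (i, j) \<in> E}. mu n i j * \<kappa> i j) - lamhat lam lam0 n i)"

lemma vtheta_feasible_iff:
  "vtheta_feasible E lam lam0 mu mu0 N nu \<xi>s n p t \<kappa> \<longleftrightarrow>
     \<kappa> \<in> kappa_set E mu mu0 N nu \<xi>s n \<and> (\<forall>i. t * p i \<le> kappa_surplus E lam lam0 mu n \<kappa> $ i)"
  unfolding vtheta_feasible_def kappa_set_def kappa_surplus_def by (auto simp: algebra_simps)

lemma convex_kappa_surplus_image:
  "convex (kappa_surplus E lam lam0 mu n ` kappa_set E mu mu0 N nu \<xi>s n)"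
proof (rule convexI)
  fix x y and u u' :: real
  assume "x \<in> kappa_surplus E lam lam0 mu n ` kappa_set E mu mu0 N nu \<xi>s n"
    "y \<in> kappa_surplus E lam lam0 mu n ` kappa_set E mu mu0 N nu \<xi>s n" "0 \<le> u" "0 \<le> u'" "u + u' = 1"
  then obtain k1 k2 where k: "k1 \<in> kappa_set E mu mu0 N nu \<xi>s n" "k2 \<in> kappa_set E mu mu0 N nu \<xi>s n"
    and x: "x = kappa_surplus E lam lam0 mu n k1" and y: "y = kappa_surplus E lam lam0 mu n k2"
    and u': "u' = 1 - u" by auto
  define k where "k i j = u * k1 i j + u' * k2 i j" for i j
  have "(\<Sum>i\<in>{i. (i, j) \<in> E}. k i j) = theta E mu mu0 N nu \<xi>s n j" for j
  proof -
    have "(\<Sum>i\<in>{i. (i, j) \<in> E}. k i j)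
        = u * (\<Sum>i\<in>{i. (i, j) \<in> E}. k1 i j) + u' * (\<Sum>i\<in>{i. (i, j) \<in> E}. k2 i j)"
      unfolding k_def by (simp add: sum.distrib sum_distrib_left)
    also have "\<dots> = theta E mu mu0 N nu \<xi>s n j"
      using k \<open>u + u' = 1\<close> by (simp add: kappa_set_def distrib_right[symmetric])
    finally show ?thesis .
  qed
  then have "k \<in> kappa_set E mu mu0 N nu \<xi>s n"
    using k by (simp add: kappa_set_def k_def)
  moreover have "u *\<^sub>R x + u' *\<^sub>R y = kappa_surplus E lam lam0 mu n k"
    unfolding x y k_def u' kappa_surplus_def vec_eq_iff
    by (simp add: sum.distrib sum_distrib_left sum_subtractf algebra_simps)
  ultimately show "u *\<^sub>R x + u' *\<^sub>R y \<in> kappa_surplus E lam lam0 mu n ` kappa_set E mu mu0 N nu \<xi>s n"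
    by blast
qed

lemma vtheta_dual_weights:
  assumes v_opt: "vtheta_opt_value E lam lam0 mu mu0 N nu \<xi>s n p v" and p_pos: "\<And>i. p i > 0"
  obtains w :: "real^'i::finite" where "\<And>i. w $ i \<ge> 0" "w \<noteq> 0"
    "\<And>\<kappa>. \<kappa> \<in> kappa_set E mu mu0 N nu \<xi>s n \<Longrightarrow>
       w \<bullet> kappa_surplus E lam lam0 mu n \<kappa> \<le> v * (\<Sum>i\<in>UNIV. w $ i * p i)"
proof -
  let ?G = "kappa_surplus E lam lam0 mu n ` kappa_set E mu mu0 N nu \<xi>s n"
  obtain \<kappa>0 where "vtheta_feasible E lam lam0 mu mu0 N nu \<xi>s n p v \<kappa>0"
    using v_opt unfolding vtheta_opt_value_def by blast
  then have mem: "kappa_surplus E lam lam0 mu n \<kappa>0 \<in> ?G" by (simp add: vtheta_feasible_iff)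
  have opt: "\<forall>g\<in>?G. \<forall>t. (\<forall>i. t * (\<chi> i. p i) $ i \<le> g $ i) \<longrightarrow> t \<le> v"
    using v_opt unfolding vtheta_opt_value_def by (auto simp: vtheta_feasible_iff)
  have "(\<chi> i. p i) $ i > 0" for i using p_pos by simp
  from lp_dual_weights[OF convex_kappa_surplus_image mem opt this]
  obtain w where w: "\<And>i. w $ i \<ge> 0" "w \<noteq> 0"
    and wG: "\<And>g. g \<in> ?G \<Longrightarrow> w \<bullet> g \<le> v * (w \<bullet> (\<chi> i. p i))"
    by blast
  show ?thesis
  proof (rule that[OF w])
    fix \<kappa> assume "\<kappa> \<in> kappa_set E mu mu0 N nu \<xi>s n"
    then show "w \<bullet> kappa_surplus E lam lam0 mu n \<kappa> \<le> v * (\<Sum>i\<in>UNIV. w $ i * p i)"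
      using wG[of "kappa_surplus E lam lam0 mu n \<kappa>"] by (simp add: inner_vec_def)
  qed
qed

section \<open>Drift under work-conserving policies\<close>

lemma bip_tree_server_has_class:
  assumes "bip_tree (E :: ('i \<times> 'j) set)"
  shows "\<exists>i. (i, j) \<in> E"
proof -
  have "(Inr j, Inl undefined) \<in> {(a, b). bip_adj E a b}\<^sup>*"
    using assms unfolding bip_tree_def by blast
  then show ?thesis
    by (cases rule: converse_rtranclE) (auto simp: bip_adj_def)
qed

lemma jump_chain_dep_rate:
  fixes E :: "('i::finite \<times> 'j::finite) set" and la :: "'i \<Rightarrow> real"
  assumes "wc_policy E Nn z" and "\<And>i. la i > 0" and mu_pos: "\<And>i j. (i, j) \<in> E \<Longrightarrow> mun i j > 0"
  shows "jump_chain la (dep_rate mun z)"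
proof
  fix x :: "'i \<Rightarrow> nat" and i
  have off: "\<And>i j. (i, j) \<notin> E \<Longrightarrow> z x i j = 0" and row: "(\<Sum>j\<in>UNIV. z x i j) \<le> x i"
    using assms(1) unfolding wc_policy_def wc_action_def by auto
  have "mun i j * real (z x i j) \<ge> 0" for j
    using mu_pos[of i j] off[of i j] by (cases "(i, j) \<in> E") auto
  then show "dep_rate mun z x i \<ge> 0" unfolding dep_rate_def by (simp add: sum_nonneg)
  show "dep_rate mun z x i = 0" if "x i = 0"
  proof -
    have "z x i j = 0" for j using row that by simp
    then show ?thesis by (simp add: dep_rate_def)
  qed
qed (rule assms(2))

lemma dep_rate_le:
  assumes "wc_policy E Nn z"
  shows "dep_rate mun z x i \<le> (\<Sum>i\<in>UNIV. \<Sum>j\<in>UNIV. \<bar>mun i j\<bar> * real (Nn j))"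
proof -
  have z_le: "z x i j \<le> Nn j" for j
  proof -
    have "z x i j \<le> (\<Sum>i\<in>UNIV. z x i j)" by (rule member_le_sum) auto
    also have "\<dots> \<le> Nn j" using assms unfolding wc_policy_def wc_action_def by blast
    finally show ?thesis .
  qed
  have "dep_rate mun z x i \<le> (\<Sum>j\<in>UNIV. \<bar>mun i j\<bar> * real (Nn j))"
    unfolding dep_rate_def
  proof (rule sum_mono)
    fix j
    have "mun i j * real (z x i j) \<le> \<bar>mun i j\<bar> * real (z x i j)" by (intro mult_right_mono) auto
    also have "\<dots> \<le> \<bar>mun i j\<bar> * real (Nn j)" using z_le[of j] by (intro mult_left_mono) auto
    finally show "mun i j * real (z x i j) \<le> \<bar>mun i j\<bar> * real (Nn j)" .
  qed
  also have "\<dots> \<le> (\<Sum>i\<in>UNIV. \<Sum>j\<in>UNIV. \<bar>mun i j\<bar> * real (Nn j))"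
    by (rule member_le_sum[of i UNIV "\<lambda>i. \<Sum>j\<in>UNIV. \<bar>mun i j\<bar> * real (Nn j)"]) (auto intro: sum_nonneg)
  finally show ?thesis .
qed

lemma wc_action_fill_idle:
  assumes "wc_action E Nn x z" and has_class: "\<And>j. \<exists>i. (i, j) \<in> E"
  obtains \<zeta> where "\<And>i j. (i, j) \<notin> E \<Longrightarrow> \<zeta> i j = 0" "\<And>j. (\<Sum>i\<in>UNIV. \<zeta> i j) = real (Nn j)"
    "\<And>i j. real (z i j) \<le> \<zeta> i j"
proof -
  obtain cl where cl: "\<And>j. (cl j, j) \<in> E" using has_class by metis
  have off: "\<And>i j. (i, j) \<notin> E \<Longrightarrow> z i j = 0" and col: "\<And>j. (\<Sum>i\<in>UNIV. z i j) \<le> Nn j"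
    using assms(1) unfolding wc_action_def by auto
  define idle where "idle j = real (Nn j) - real (\<Sum>i\<in>UNIV. z i j)" for j
  have "idle j \<ge> 0" for j using col[of j] unfolding idle_def by linarith
  define \<zeta> where "\<zeta> i j = real (z i j) + (if i = cl j then idle j else 0)" for i j
  show ?thesis
  proof (rule that)
    show "(i, j) \<notin> E \<Longrightarrow> \<zeta> i j = 0" for i j using off[of i j] cl[of j] by (auto simp: \<zeta>_def)
    show "(\<Sum>i\<in>UNIV. \<zeta> i j) = real (Nn j)" for j by (simp add: \<zeta>_def sum.distrib idle_def)
    show "real (z i j) \<le> \<zeta> i j" for i j using \<open>idle j \<ge> 0\<close> by (simp add: \<zeta>_def)
  qed
qed

lemma sum_edges_eq_sum_UNIV:
  assumes "\<And>j. \<not> P j \<Longrightarrow> f j = (0::real)"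
  shows "(\<Sum>j\<in>{j::'j::finite. P j}. f j) = (\<Sum>j\<in>UNIV. f j)"
  by (rule sum.mono_neutral_left) (auto simp: assms)

text \<open>A full allocation \<open>\<zeta>\<close>, centred at the fluid allocation \<open>n z\<^sup>*\<close> and scaled by \<open>\<surd>n\<close>,
  is LP-feasible, and its class surplus is the scaled net service rate.\<close>

lemma kappa_of_allocation:
  fixes E :: "('i::finite \<times> 'j::finite) set" and n :: nat
  assumes mu_pos: "\<And>i j. (i, j) \<in> E \<Longrightarrow> mu n i j > 0"
    and crp: "crp_unique_solution E lam0 mu0 nu \<xi>s" and "n \<ge> 1"
    and \<zeta>_off: "\<And>i j. (i, j) \<notin> E \<Longrightarrow> \<zeta> i j = 0"
    and \<zeta>_col: "\<And>j. (\<Sum>i\<in>UNIV. \<zeta> i j) = real (N n j)"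
  defines "\<kappa> \<equiv> \<lambda>i j. if (i, j) \<in> E then (\<zeta> i j - real n * (\<xi>s i j * nu j)) / sqrt n
                        + muhat mu mu0 n i j / mu n i j * (\<xi>s i j * nu j) else 0"
  shows "\<kappa> \<in> kappa_set E mu mu0 N nu \<xi>s n"
    and "kappa_surplus E lam lam0 mu n \<kappa> $ i = ((\<Sum>j\<in>UNIV. mu n i j * \<zeta> i j) - lam n i) / sqrt n"
proof -
  have \<xi>_off: "\<And>i j. (i, j) \<notin> E \<Longrightarrow> \<xi>s i j = 0"
    and \<xi>_row: "\<And>i. (\<Sum>j \<in> {j. (i, j) \<in> E}. mu0 i j * nu j * \<xi>s i j) = lam0 i"
    and \<xi>_col: "\<And>j. (\<Sum>i\<in>UNIV. \<xi>s i j) = 1"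
    using crp unfolding crp_unique_solution_def crp_feasible_def by auto
  define sq where "sq = sqrt (real n)"
  have "sq > 0" and n_sq: "real n = sq * sq" using \<open>n \<ge> 1\<close> by (auto simp: sq_def)
  have "(\<Sum>i\<in>{i. (i, j) \<in> E}. \<kappa> i j) = theta E mu mu0 N nu \<xi>s n j" for j
  proof -
    have "(\<Sum>i\<in>{i. (i, j) \<in> E}. \<kappa> i j)
        = (\<Sum>i\<in>{i. (i, j) \<in> E}. \<zeta> i j) / sq - real n / sq * (\<Sum>i\<in>{i. (i, j) \<in> E}. \<xi>s i j * nu j)
          + (\<Sum>i\<in>{i. (i, j) \<in> E}. muhat mu mu0 n i j / mu n i j * (\<xi>s i j * nu j))"
      unfolding \<kappa>_def sq_def[symmetric]
      by (simp add: sum.distrib sum_subtractf sum_divide_distrib sum_distrib_left diff_divide_distrib)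
    also have "(\<Sum>i\<in>{i. (i, j) \<in> E}. \<zeta> i j) = real (N n j)"
      using \<zeta>_col by (simp add: sum_edges_eq_sum_UNIV \<zeta>_off)
    also have "(\<Sum>i\<in>{i. (i, j) \<in> E}. \<xi>s i j * nu j) = nu j"
      using \<xi>_col by (simp add: sum_edges_eq_sum_UNIV \<xi>_off sum_distrib_right[symmetric])
    also have "real (N n j) / sq - real n / sq * nu j = nuhat N nu n j"
      unfolding nuhat_def sq_def[symmetric] using \<open>sq > 0\<close> \<open>n \<ge> 1\<close> by (simp add: n_sq field_simps)
    finally show ?thesis by (simp add: theta_def)
  qed
  then show "\<kappa> \<in> kappa_set E mu mu0 N nu \<xi>s n"
    by (simp add: kappa_set_def \<kappa>_def)
  have "mu n i j * \<kappa> i j = mu n i j * \<zeta> i j / sq - sq * (mu0 i j * nu j * \<xi>s i j)" if "(i, j) \<in> E" for j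
    using mu_pos[OF that] \<open>sq > 0\<close> that
    unfolding \<kappa>_def muhat_def sq_def[symmetric] by (simp add: n_sq field_simps)
  then have "(\<Sum>j\<in>{j. (i, j) \<in> E}. mu n i j * \<kappa> i j)
      = (\<Sum>j\<in>{j. (i, j) \<in> E}. mu n i j * \<zeta> i j) / sq - sq * lam0 i"
    by (simp add: sum_subtractf sum_divide_distrib sum_distrib_left[symmetric] \<xi>_row)
  also have "(\<Sum>j\<in>{j. (i, j) \<in> E}. mu n i j * \<zeta> i j) = (\<Sum>j\<in>UNIV. mu n i j * \<zeta> i j)"
    by (simp add: sum_edges_eq_sum_UNIV \<zeta>_off)
  finally show "kappa_surplus E lam lam0 mu n \<kappa> $ i = ((\<Sum>j\<in>UNIV. mu n i j * \<zeta> i j) - lam n i) / sqrt n"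
    unfolding kappa_surplus_def lamhat_def sq_def[symmetric] using \<open>sq > 0\<close>
    by (simp add: n_sq field_simps)
qed

lemma wc_policy_drift_ge:
  fixes E :: "('i::finite \<times> 'j::finite) set" and w :: "real^'i"
  assumes tree: "bip_tree E" and mu_pos: "\<And>i j. (i, j) \<in> E \<Longrightarrow> mu n i j > 0"
    and crp: "crp_unique_solution E lam0 mu0 nu \<xi>s" and "n \<ge> 1"
    and wc: "wc_policy E (N n) z"
    and w_nonneg: "\<And>i. w $ i \<ge> 0"
    and w_dual: "\<And>\<kappa>. \<kappa> \<in> kappa_set E mu mu0 N nu \<xi>s n \<Longrightarrow>
                    w \<bullet> kappa_surplus E lam lam0 mu n \<kappa> \<le> v * W"
  shows "(\<Sum>i\<in>UNIV. w $ i * (lam n i - dep_rate (mu n) z x i)) \<ge> - (sqrt n * v * W)"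
proof -
  have "wc_action E (N n) x (z x)" using wc unfolding wc_policy_def by blast
  then obtain \<zeta> where \<zeta>_off: "\<And>i j. (i, j) \<notin> E \<Longrightarrow> \<zeta> i j = 0"
    and \<zeta>_col: "\<And>j. (\<Sum>i\<in>UNIV. \<zeta> i j) = real (N n j)" and z_le: "\<And>i j. real (z x i j) \<le> \<zeta> i j"
    using bip_tree_server_has_class[OF tree] by (rule wc_action_fill_idle) blast
  note \<kappa> = kappa_of_allocation[where mu = mu and n = n and N = N, OF mu_pos crp \<open>n \<ge> 1\<close> \<zeta>_off \<zeta>_col]
  have "(\<Sum>i\<in>UNIV. w $ i * ((\<Sum>j\<in>UNIV. mu n i j * \<zeta> i j) - lam n i)) / sqrt n \<le> v * W"
    using w_dual[OF \<kappa>(1)] by (simp add: inner_vec_def \<kappa>(2) sum_divide_distrib)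
  then have surplus: "(\<Sum>i\<in>UNIV. w $ i * ((\<Sum>j\<in>UNIV. mu n i j * \<zeta> i j) - lam n i)) \<le> sqrt n * v * W"
    using \<open>n \<ge> 1\<close> by (simp add: divide_le_eq mult.commute mult.left_commute)
  have "dep_rate (mu n) z x i \<le> (\<Sum>j\<in>UNIV. mu n i j * \<zeta> i j)" for i
  proof -
    have "mu n i j * real (z x i j) \<le> mu n i j * \<zeta> i j" for j
    proof (cases "(i, j) \<in> E")
      case False
      then have "z x i j = 0" using wc unfolding wc_policy_def wc_action_def by blast
      then show ?thesis using \<zeta>_off[OF False] by simp
    qed (use mu_pos z_le in \<open>simp add: less_imp_le\<close>)
    then show ?thesis unfolding dep_rate_def by (rule sum_mono)
  qed
  then have "(\<Sum>i\<in>UNIV. w $ i * ((\<Sum>j\<in>UNIV. mu n i j * \<zeta> i j) - lam n i))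
      \<ge> (\<Sum>i\<in>UNIV. - (w $ i * (lam n i - dep_rate (mu n) z x i)))"
    using w_nonneg by (intro sum_mono) (simp add: mult_left_mono algebra_simps)
  with surplus show ?thesis by (simp add: sum_negf)
qed

theorem theorem6:
  fixes E :: "('i::finite \<times> 'j::finite) set"
    and lam :: "nat \<Rightarrow> 'i \<Rightarrow> real" and mu :: "nat \<Rightarrow> 'i \<Rightarrow> 'j \<Rightarrow> real" and N :: "nat \<Rightarrow> 'j \<Rightarrow> nat"
    and lam0 :: "'i \<Rightarrow> real" and mu0 :: "'i \<Rightarrow> 'j \<Rightarrow> real" and nu :: "'j \<Rightarrow> real"
    and \<xi>s :: "'i \<Rightarrow> 'j \<Rightarrow> real"
    and n :: nat and p :: "'i \<Rightarrow> real" and v :: real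
  assumes tree: "bip_tree E"
    and lam_pos: "\<And>m i. lam m i > 0"
    and mu_pos: "\<And>m i j. (i, j) \<in> E \<Longrightarrow> mu m i j > 0"
    and N_pos: "\<And>m j. m \<ge> 1 \<Longrightarrow> N m j \<ge> 1"
    and lam_lim: "\<And>i. (\<lambda>m. lam m i / real m) \<longlonglongrightarrow> lam0 i" and lam0_pos: "\<And>i. lam0 i > 0"
    and N_lim: "\<And>j. (\<lambda>m. real (N m j) / real m) \<longlonglongrightarrow> nu j" and nu_pos: "\<And>j. nu j > 0"
    and mu_lim: "\<And>i j. (i, j) \<in> E \<Longrightarrow> (\<lambda>m. mu m i j) \<longlonglongrightarrow> mu0 i j"
    and mu0_pos: "\<And>i j. (i, j) \<in> E \<Longrightarrow> mu0 i j > 0"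
    and lamhat_conv: "\<And>i. convergent (\<lambda>m. lamhat lam lam0 m i)"
    and muhat_conv: "\<And>i j. (i, j) \<in> E \<Longrightarrow> convergent (\<lambda>m. muhat mu mu0 m i j)"
    and nuhat_conv: "\<And>j. convergent (\<lambda>m. nuhat N nu m j)"
    and crp: "crp_unique_solution E lam0 mu0 nu \<xi>s"
    and n_pos: "n \<ge> 1"
    and p_pos: "\<And>i. p i > 0" and p_sum: "(\<Sum>i\<in>UNIV. p i) = 1"
    and v_opt: "vtheta_opt_value E lam lam0 mu mu0 N nu \<xi>s n p v"
  shows "(v < 0 \<longrightarrow> (\<forall>z. wc_policy E (N n) z \<longrightarrow>
              (\<forall>x. transient_state (lam n) (dep_rate (mu n) z) x)))
       \<and> (v = 0 \<longrightarrow> (\<forall>z. wc_policy E (N n) z \<longrightarrow>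
              (\<forall>x. \<not> pos_recurrent_state (lam n) (dep_rate (mu n) z) x)))"
proof -
  obtain w :: "real^'i" where w_nonneg: "\<And>i. w $ i \<ge> 0" and "w \<noteq> 0"
    and w_dual: "\<And>\<kappa>. \<kappa> \<in> kappa_set E mu mu0 N nu \<xi>s n \<Longrightarrow>
       w \<bullet> kappa_surplus E lam lam0 mu n \<kappa> \<le> v * (\<Sum>i\<in>UNIV. w $ i * p i)"
    using vtheta_dual_weights[OF v_opt p_pos] by blast
  then obtain i0 where "w $ i0 > 0" using w_nonneg by (metis less_eq_real_def vec_eq_iff zero_index)
  define W where "W = (\<Sum>i\<in>UNIV. w $ i * p i)"
  have "W > 0"
    unfolding W_def using \<open>w $ i0 > 0\<close> p_pos w_nonneg
    by (intro sum_pos2[of _ i0]) (auto intro: mult_nonneg_nonneg less_imp_le)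
  define D where "D = (\<Sum>i\<in>UNIV. \<Sum>j\<in>UNIV. \<bar>mu n i j\<bar> * real (N n j))"
  have chain: "drift_chain (lam n) (dep_rate (mu n) z) (\<lambda>i. w $ i) (- (sqrt n * v * W))"
    if "wc_policy E (N n) z" for z
    using jump_chain_dep_rate[OF that lam_pos mu_pos[where m = n]] w_nonneg
      wc_policy_drift_ge[where mu = mu and n = n and N = N and lam = lam,
        OF tree mu_pos[where m = n] crp n_pos that w_nonneg w_dual]
    by (simp add: drift_chain_def drift_chain_axioms_def W_def)
  have D_bound: "dep_rate (mu n) z x i \<le> D" if "wc_policy E (N n) z" for z x i
    unfolding D_def using that by (rule dep_rate_le)
  have "sqrt n > 0" using n_pos by simp
  show ?thesis
  proof (intro conjI impI allI)
    fix z x assume "v < 0" "wc_policy E (N n) z"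
    then show "transient_state (lam n) (dep_rate (mu n) z) x"
      using \<open>sqrt n > 0\<close> \<open>W > 0\<close> \<open>w $ i0 > 0\<close> D_bound
      by (intro drift_chain.transient_if_positive_drift[OF chain]) (auto simp: mult_pos_neg mult_neg_pos)
  next
    fix z x assume "v = 0" "wc_policy E (N n) z"
    then show "\<not> pos_recurrent_state (lam n) (dep_rate (mu n) z) x"
      using \<open>w $ i0 > 0\<close> D_bound
      by (intro drift_chain.not_pos_recurrent_if_nonneg_drift[OF chain]) auto
  qed
qed

end
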